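(* Let $G$ be a simple graph on $n=2m\ge 4$ vertices such that $G$ or its complement $\bar{G}$ is $mK_2$ (the disjoint union of $m$ copies of $K_2$). Then for every vertex $v$, $$TDV_G(v)+TDV_{\bar{G}}(v)=n-1.$$
   Context: For a graph $H$ without isolated vertices, a set $D\subseteq V(H)$ is a total dominating set if every vertex of $H$ has a neighbor in $D$; $\gamma_t(H)$ is the minimum size of such a set, a minimum one is a $\gamma_t(H)$-set, and $TDV_H(v)$ is the number of $\gamma_t(H)$-sets containing $v$. $\bar{G}$ is the complement of $G$ on the same vertex set. *)

theory Defs
  imports Main
begin

definition simple_graph :: "'a set \<Rightarrow> ('a \<Rightarrow> 'a \<Rightarrow> bool) \<Rightarrow> bool" where
  "simple_graph V E \<longleftrightarrow> finite V \<and>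
     (\<forall>u v. E u v \<longrightarrow> u \<in> V \<and> v \<in> V \<and> u \<noteq> v) \<and>
     (\<forall>u v. E u v \<longrightarrow> E v u)"

definition complement :: "'a set \<Rightarrow> ('a \<Rightarrow> 'a \<Rightarrow> bool) \<Rightarrow> 'a \<Rightarrow> 'a \<Rightarrow> bool" where
  "complement V E u v \<longleftrightarrow> u \<in> V \<and> v \<in> V \<and> u \<noteq> v \<and> \<not> E u v"

definition is_matching_graph :: "'a set \<Rightarrow> ('a \<Rightarrow> 'a \<Rightarrow> bool) \<Rightarrow> bool" where
  "is_matching_graph V E \<longleftrightarrow> (\<exists>P. \<Union>P = V \<and>
     (\<forall>B\<in>P. card B = 2) \<and>
     (\<forall>B\<in>P. \<forall>C\<in>P. B \<noteq> C \<longrightarrow> B \<inter> C = {}) \<and>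
     (\<forall>u v. E u v \<longleftrightarrow> (\<exists>B\<in>P. u \<in> B \<and> v \<in> B \<and> u \<noteq> v)))"

definition total_dom_set :: "'a set \<Rightarrow> ('a \<Rightarrow> 'a \<Rightarrow> bool) \<Rightarrow> 'a set \<Rightarrow> bool" where
  "total_dom_set V E D \<longleftrightarrow> D \<subseteq> V \<and> (\<forall>v\<in>V. \<exists>u\<in>D. E v u)"

definition gamma_t :: "'a set \<Rightarrow> ('a \<Rightarrow> 'a \<Rightarrow> bool) \<Rightarrow> nat" where
  "gamma_t V E = (LEAST k. \<exists>D. total_dom_set V E D \<and> card D = k)"

definition gamma_t_sets :: "'a set \<Rightarrow> ('a \<Rightarrow> 'a \<Rightarrow> bool) \<Rightarrow> 'a set set" where
  "gamma_t_sets V E = {D. total_dom_set V E D \<and> card D = gamma_t V E}"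

definition TDV :: "'a set \<Rightarrow> ('a \<Rightarrow> 'a \<Rightarrow> bool) \<Rightarrow> 'a \<Rightarrow> nat" where
  "TDV V E v = card {D \<in> gamma_t_sets V E. v \<in> D}"

end

theory Submission
  imports Defs
begin

text \<open>In \<open>mK\<^sub>2\<close> every vertex has degree one, so a total dominating set must contain the
  unique neighbour of every vertex: \<open>V\<close> itself is the only \<open>\<gamma>\<^sub>t\<close>-set and \<open>TDV(v) = 1\<close>.
  In the complement (a cocktail-party graph, \<open>n \<ge> 4\<close>) no single vertex dominates itself, while
  \<open>{v, w}\<close> is total dominating exactly when \<open>w\<close> is neither \<open>v\<close> nor its partner; hence
  \<open>\<gamma>\<^sub>t = 2\<close> and \<open>v\<close> lies in \<open>n - 2\<close> of the \<open>\<gamma>\<^sub>t\<close>-sets. Complementation is an involution on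
  simple graphs, so both hypotheses lead to \<open>1 + (n - 2) = n - 1\<close>.\<close>

definition perfect_matching :: "'a set \<Rightarrow> ('a \<Rightarrow> 'a \<Rightarrow> bool) \<Rightarrow> bool" where
  "perfect_matching V M \<longleftrightarrow>
     (\<forall>u v. M u v \<longrightarrow> u \<in> V \<and> v \<in> V \<and> u \<noteq> v) \<and> (\<forall>u v. M u v \<longrightarrow> M v u) \<and>
     (\<forall>v\<in>V. \<exists>w. M v w) \<and> (\<forall>v w w'. M v w \<longrightarrow> M v w' \<longrightarrow> w = w')"

lemma perfect_matchingD:
  assumes "perfect_matching V M"
  shows perfect_matching_edgeD: "M u v \<Longrightarrow> u \<in> V \<and> v \<in> V \<and> u \<noteq> v"
    and perfect_matching_sym: "M u v \<Longrightarrow> M v u"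
    and perfect_matching_partner: "v \<in> V \<Longrightarrow> \<exists>w. M v w"
    and perfect_matching_unique: "M v w \<Longrightarrow> M v w' \<Longrightarrow> w = w'"
  using assms unfolding perfect_matching_def by blast+

lemma card_2_memE:
  assumes "card B = 2" "v \<in> B"
  obtains w where "B = {v, w}" "v \<noteq> w"
proof -
  obtain x y where "B = {x, y}" "x \<noteq> y" using assms(1) by (auto simp: card_2_iff)
  with assms(2) that show ?thesis by (cases "v = x") (auto simp: insert_commute)
qed

lemma matching_graph_imp_perfect_matching:
  assumes "is_matching_graph V M"
  shows "perfect_matching V M"
proof -
  obtain P where union: "\<Union>P = V" and pairs: "\<And>B. B \<in> P \<Longrightarrow> card B = 2"
    and disj: "\<And>B C. B \<in> P \<Longrightarrow> C \<in> P \<Longrightarrow> B \<noteq> C \<Longrightarrow> B \<inter> C = {}"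
    and edge: "\<And>u v. M u v \<longleftrightarrow> (\<exists>B\<in>P. u \<in> B \<and> v \<in> B \<and> u \<noteq> v)"
    using assms unfolding is_matching_graph_def by metis
  have partner: "\<exists>w. M v w" if "v \<in> V" for v
  proof -
    obtain B where B: "B \<in> P" "v \<in> B" using \<open>v \<in> V\<close> union by blast
    then obtain w where "B = {v, w}" "v \<noteq> w" using pairs by (metis card_2_memE)
    then show ?thesis using B edge by blast
  qed
  have unique: "w = w'" if edges: "M v w" "M v w'" for v w w'
  proof -
    obtain B B' where B: "B \<in> P" "v \<in> B" "w \<in> B" "v \<noteq> w"
      and B': "B' \<in> P" "v \<in> B'" "w' \<in> B'" "v \<noteq> w'"
      using edges edge by meson
    have "B' = B" using disj B B' by blast
    obtain x where "B = {v, x}" using pairs B by (metis card_2_memE)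
    then show ?thesis using B B' \<open>B' = B\<close> by blast
  qed
  have "M u v \<Longrightarrow> u \<in> V \<and> v \<in> V \<and> u \<noteq> v" "M u v \<Longrightarrow> M v u" for u v
    using union edge by blast+
  then show ?thesis
    unfolding perfect_matching_def using partner unique by blast
qed

lemma gamma_t_eqI:
  assumes "total_dom_set V E D" "card D = k"
    and "\<And>D'. total_dom_set V E D' \<Longrightarrow> k \<le> card D'"
  shows "gamma_t V E = k"
  unfolding gamma_t_def
proof (rule Least_equality)
  show "\<exists>D. total_dom_set V E D \<and> card D = k" using assms(1,2) by blast
next
  fix k' assume "\<exists>D'. total_dom_set V E D' \<and> card D' = k'"
  then show "k \<le> k'" using assms(3) by blast
qed

lemma card_total_dom_set_ge_2:
  assumes "finite V" "V \<noteq> {}" "\<And>u. \<not> E u u" "total_dom_set V E D"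
  shows "2 \<le> card D"
proof -
  have "finite D" "D \<noteq> {}"
    using assms unfolding total_dom_set_def by (auto intro: finite_subset)
  moreover have "card D \<noteq> 1"
  proof
    assume "card D = 1"
    then obtain z where "D = {z}" by (rule card_1_singletonE)
    then show False using assms(3,4) unfolding total_dom_set_def by blast
  qed
  ultimately show ?thesis by (metis One_nat_def card_0_eq less_2_cases not_le)
qed

lemma total_dom_set_perfect_matching_iff:
  assumes "perfect_matching V M"
  shows "total_dom_set V M D \<longleftrightarrow> D = V"
proof
  assume dom: "total_dom_set V M D"
  have "x \<in> D" if "x \<in> V" for x
  proof -
    obtain p where "M x p" using perfect_matching_partner[OF assms \<open>x \<in> V\<close>] ..
    then have "p \<in> V" "M p x" using perfect_matchingD[OF assms] by blast+
    moreover obtain u where "u \<in> D" "M p u" using dom \<open>p \<in> V\<close> unfolding total_dom_set_def by blast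
    ultimately show ?thesis using perfect_matching_unique[OF assms] by metis
  qed
  then show "D = V" using dom unfolding total_dom_set_def by blast
next
  assume "D = V"
  then show "total_dom_set V M D"
    using assms unfolding total_dom_set_def perfect_matching_def by blast
qed

lemma TDV_perfect_matching:
  assumes "perfect_matching V M" "v \<in> V"
  shows "TDV V M v = 1"
proof -
  have "gamma_t V M = card V"
    by (rule gamma_t_eqI[of _ _ V]) (auto simp: total_dom_set_perfect_matching_iff[OF assms(1)])
  then have "gamma_t_sets V M = {V}"
    unfolding gamma_t_sets_def by (auto simp: total_dom_set_perfect_matching_iff[OF assms(1)])
  then have "{D \<in> gamma_t_sets V M. v \<in> D} = {V}" using assms(2) by auto
  then show ?thesis unfolding TDV_def by simp
qed

lemma total_dom_set_complement_pair_iff: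
  assumes "perfect_matching V M" "M v p" "w \<in> V" "w \<noteq> v"
  shows "total_dom_set V (complement V M) {v, w} \<longleftrightarrow> w \<noteq> p"
proof
  assume "total_dom_set V (complement V M) {v, w}"
  moreover have "v \<in> V" using perfect_matching_edgeD[OF assms(1,2)] by blast
  ultimately obtain u where "u \<in> {v, w}" "complement V M v u"
    unfolding total_dom_set_def by blast
  then show "w \<noteq> p" using assms(2) unfolding complement_def by auto
next
  assume "w \<noteq> p"
  have vw: "\<not> M v w" "\<not> M p w"
    using \<open>w \<noteq> p\<close> assms(2,4) perfect_matching_unique[OF assms(1)]
      perfect_matching_sym[OF assms(1) assms(2)] by blast+
  have "\<exists>u\<in>{v, w}. complement V M x u" if "x \<in> V" for x
  proof (cases "x = v \<or> M x v")
    case True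
    then have "x = v \<or> x = p"
      using perfect_matching_unique[OF assms(1) assms(2)] perfect_matching_sym[OF assms(1)] by blast
    then show ?thesis using vw that assms(3,4) \<open>w \<noteq> p\<close> unfolding complement_def by auto
  next
    case False
    then show ?thesis using that perfect_matching_edgeD[OF assms(1,2)] unfolding complement_def by auto
  qed
  then show "total_dom_set V (complement V M) {v, w}"
    using assms(3) perfect_matching_edgeD[OF assms(1,2)] unfolding total_dom_set_def by blast
qed

lemma gamma_t_complement_perfect_matching:
  assumes "perfect_matching V M" "finite V" "4 \<le> card V" "M v p"
  shows "gamma_t V (complement V M) = 2"
proof -
  have "\<not> V \<subseteq> {v, p}"
  proof
    assume "V \<subseteq> {v, p}"
    then have "card V \<le> card {v, p}" by (simp add: card_mono)
    also have "\<dots> \<le> 2" by (simp add: card_insert_le_m1)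
    finally show False using assms(3) by simp
  qed
  then obtain w where "w \<in> V" "w \<noteq> v" "w \<noteq> p" by blast
  with assms(1,2,4) show ?thesis
    by (intro gamma_t_eqI[of _ _ "{v, w}"] card_total_dom_set_ge_2)
      (auto simp: total_dom_set_complement_pair_iff complement_def)
qed

lemma TDV_complement_perfect_matching:
  assumes "perfect_matching V M" "finite V" "4 \<le> card V" "v \<in> V"
  shows "TDV V (complement V M) v = card V - 2"
proof -
  obtain p where p: "M v p" using perfect_matching_partner[OF assms(1,4)] ..
  have p_ne_v: "p \<noteq> v" and p_in_V: "p \<in> V" using perfect_matching_edgeD[OF assms(1) p] by auto
  have gamma: "gamma_t V (complement V M) = 2"
    using gamma_t_complement_perfect_matching[OF assms(1-3) p] .
  have "D \<in> gamma_t_sets V (complement V M) \<and> v \<in> D \<longleftrightarrow> (\<exists>w \<in> V - {v, p}. D = {v, w})" for D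
  proof
    assume D: "D \<in> gamma_t_sets V (complement V M) \<and> v \<in> D"
    then obtain w where "D = {v, w}" "w \<noteq> v"
      unfolding gamma_t_sets_def gamma by (auto simp: card_2_iff doubleton_eq_iff)
    moreover have "w \<in> V" using D \<open>D = {v, w}\<close> unfolding gamma_t_sets_def total_dom_set_def by auto
    ultimately show "\<exists>w \<in> V - {v, p}. D = {v, w}"
      using D total_dom_set_complement_pair_iff[OF assms(1) p] unfolding gamma_t_sets_def by auto
  next
    assume "\<exists>w \<in> V - {v, p}. D = {v, w}"
    then show "D \<in> gamma_t_sets V (complement V M) \<and> v \<in> D"
      using total_dom_set_complement_pair_iff[OF assms(1) p] unfolding gamma_t_sets_def gamma by auto
  qed
  then have "{D \<in> gamma_t_sets V (complement V M). v \<in> D} = (\<lambda>w. {v, w}) ` (V - {v, p})"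
    by blast
  moreover have "inj_on (\<lambda>w. {v, w}) (V - {v, p})"
    by (rule inj_onI) (auto simp: doubleton_eq_iff)
  moreover have "card (V - {v, p}) = card V - 2"
    using assms(2,4) p_ne_v p_in_V by (simp add: card_Diff_subset)
  ultimately show ?thesis unfolding TDV_def by (simp add: card_image)
qed

lemma complement_complement:
  assumes "simple_graph V E"
  shows "complement V (complement V E) = E"
  using assms unfolding simple_graph_def complement_def by (auto intro!: ext)

theorem proposition2p11:
  fixes V :: "'a set" and E :: "'a \<Rightarrow> 'a \<Rightarrow> bool" and m :: nat
  assumes "simple_graph V E"
    and "card V = 2 * m" and "2 * m \<ge> 4"
    and "is_matching_graph V E \<or> is_matching_graph V (complement V E)"
  shows "\<forall>v\<in>V. TDV V E v + TDV V (complement V E) v = card V - 1"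
proof
  fix v assume v: "v \<in> V"
  have fin: "finite V" and four: "4 \<le> card V"
    using assms(1-3) unfolding simple_graph_def by auto
  consider "perfect_matching V E" | "perfect_matching V (complement V E)"
    using assms(4) matching_graph_imp_perfect_matching by blast
  then show "TDV V E v + TDV V (complement V E) v = card V - 1"
  proof cases
    case 1
    then show ?thesis
      using TDV_perfect_matching[OF 1 v] TDV_complement_perfect_matching[OF 1 fin four v] four
      by simp
  next
    case 2
    then show ?thesis
      using TDV_perfect_matching[OF 2 v] TDV_complement_perfect_matching[OF 2 fin four v] four
        complement_complement[OF assms(1)]
      by simp
  qed
qed

end
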